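(* Let $X$ be a non-degenerate random variable with $E|X|<\infty$ whose cumulative distribution function $F$ is differentiable with density $f$, and let $\mu=EX$. Then $$\lim_{\alpha\to 1/2-} s_2(\alpha) = 2F(\mu)-1 .$$
   Context: For a random variable $X$ with $E|X|<\infty$ and $\tau\in(0,1)$, the $\tau$-expectile $e_X(\tau)$ is the unique real number $t$ satisfying $\tau\, E(X-t)_+ = (1-\tau)\, E(X-t)_-$, where $x_+=\max\{x,0\}$ and $x_-=\max\{-x,0\}$; $e_X(1/2)=\mu=EX$. For $\alpha\in(0,1/2)$ the normalized expectile skewness is $$s_2(\alpha) = \frac{1}{1-2\alpha}\cdot\frac{e_X(1-\alpha)+e_X(\alpha)-2\mu}{e_X(1-\alpha)-e_X(\alpha)}.$$ *)

theory Defs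
  imports "HOL-Probability.Probability"
begin

definition expectile :: "'a measure \<Rightarrow> ('a \<Rightarrow> real) \<Rightarrow> real \<Rightarrow> real" where
  "expectile M X \<tau> =
     (THE t. \<tau> * (\<integral>x. max (X x - t) 0 \<partial>M) = (1 - \<tau>) * (\<integral>x. max (t - X x) 0 \<partial>M))"

definition expectile_skew2 :: "'a measure \<Rightarrow> ('a \<Rightarrow> real) \<Rightarrow> real \<Rightarrow> real" where
  "expectile_skew2 M X \<alpha> =
     (1 / (1 - 2 * \<alpha>)) *
     ((expectile M X (1 - \<alpha>) + expectile M X \<alpha> - 2 * (\<integral>x. X x \<partial>M)) /
      (expectile M X (1 - \<alpha>) - expectile M X \<alpha>))"

end

theory Submission
  imports Defs
begin

text \<open>Write \<open>S t = E|X - t|\<close>. Since \<open>(X - t)\<^sub>+ + (X - t)\<^sub>- = |X - t|\<close> and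
  \<open>(X - t)\<^sub>+ - (X - t)\<^sub>- = X - t\<close>, the defining equation of the \<open>\<tau>\<close>-expectile reads
  \<open>t = \<mu> + (2\<tau> - 1) S t\<close>. As \<open>S\<close> is 1-Lipschitz this is a contraction for \<open>0 < \<tau> < 1\<close>, so the
  expectile is its unique fixed point, and it tends to \<open>\<mu>\<close> as \<open>\<tau> \<rightarrow> 1/2\<close>. Subtracting the
  equations for \<open>\<tau> = 1 - \<alpha>\<close> and \<open>\<tau> = \<alpha>\<close> turns \<open>s\<^sub>2(\<alpha>)\<close> into a difference quotient of \<open>S\<close>
  between \<open>e(\<alpha>)\<close> and \<open>e(1 - \<alpha>)\<close>. On \<open>[a, b]\<close> the slope of \<open>S\<close> lies between \<open>2F(a) - 1\<close> and
  \<open>2F(b) - 1\<close>, and continuity of \<open>F\<close> at \<open>\<mu>\<close> gives the limit.\<close>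

context prob_space
begin

definition abs_dev :: "('a \<Rightarrow> real) \<Rightarrow> real \<Rightarrow> real" where
  "abs_dev X t = expectation (\<lambda>x. \<bar>X x - t\<bar>)"

lemma abs_dev_nonneg: "abs_dev X t \<ge> 0"
  unfolding abs_dev_def by simp

lemma integrable_abs_dev:
  fixes X :: "'a \<Rightarrow> real"
  assumes "integrable M X"
  shows "integrable M (\<lambda>x. \<bar>X x - t\<bar>)"
  using assms by auto

lemma abs_dev_pos:
  assumes "integrable M X" and "\<not> (\<exists>c. AE x in M. X x = c)"
  shows "abs_dev X t > 0"
proof (rule ccontr)
  assume "\<not> abs_dev X t > 0"
  then have "expectation (\<lambda>x. \<bar>X x - t\<bar>) = 0"
    using abs_dev_nonneg[of X t] unfolding abs_dev_def by simp
  then have "AE x in M. X x = t"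
    using integral_nonneg_eq_0_iff_AE[OF integrable_abs_dev[OF assms(1)]] by simp
  then show False using assms(2) by blast
qed

lemma abs_dev_lipschitz:
  assumes "integrable M X"
  shows "\<bar>abs_dev X s - abs_dev X t\<bar> \<le> \<bar>s - t\<bar>"
proof -
  have "abs_dev X s - abs_dev X t = expectation (\<lambda>x. \<bar>X x - s\<bar> - \<bar>X x - t\<bar>)"
    unfolding abs_dev_def using integrable_abs_dev[OF assms] by simp
  also have "\<bar>\<dots>\<bar> \<le> expectation (\<lambda>x. \<bar>\<bar>X x - s\<bar> - \<bar>X x - t\<bar>\<bar>)"
    by (rule integral_abs_bound)
  also have "\<dots> \<le> expectation (\<lambda>x. \<bar>s - t\<bar>)"
    using integrable_abs_dev[OF assms] by (intro integral_mono) auto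
  finally show ?thesis by (simp add: prob_space)
qed

lemma expectile_equation_iff:
  assumes "integrable M X"
  shows "\<tau> * expectation (\<lambda>x. max (X x - t) 0) = (1 - \<tau>) * expectation (\<lambda>x. max (t - X x) 0)
     \<longleftrightarrow> t = expectation X + (2 * \<tau> - 1) * abs_dev X t"
proof -
  define P where "P = expectation (\<lambda>x. max (X x - t) 0)"
  define N where "N = expectation (\<lambda>x. max (t - X x) 0)"
  have int: "integrable M (\<lambda>x. max (X x - t) 0)" "integrable M (\<lambda>x. max (t - X x) 0)"
    using assms by auto
  have "abs_dev X t = expectation (\<lambda>x. max (X x - t) 0 + max (t - X x) 0)"
    unfolding abs_dev_def by (rule Bochner_Integration.integral_cong) auto
  then have S: "abs_dev X t = P + N"
    unfolding P_def N_def using int by simp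
  have "expectation X - t = expectation (\<lambda>x. X x - t)"
    using assms by (simp add: prob_space)
  also have "\<dots> = expectation (\<lambda>x. max (X x - t) 0 - max (t - X x) 0)"
    by (rule Bochner_Integration.integral_cong) auto
  finally have mu: "expectation X - t = P - N"
    unfolding P_def N_def using int by simp
  show ?thesis
    unfolding P_def[symmetric] N_def[symmetric] S using mu by (auto simp: algebra_simps)
qed

lemma abs_dev_slope_bounds:
  fixes X :: "'a \<Rightarrow> real"
  assumes "X \<in> borel_measurable M" "integrable M X" "a \<le> b"
  shows "(b - a) * (2 * prob {x \<in> space M. X x \<le> a} - 1) \<le> abs_dev X b - abs_dev X a"
    and "abs_dev X b - abs_dev X a \<le> (b - a) * (2 * prob {x \<in> space M. X x \<le> b} - 1)"
proof -
  let ?A = "\<lambda>c. {x \<in> space M. X x \<le> c}"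
  let ?g = "\<lambda>c x. 2 * (b - a) * indicator (?A c) x - (b - a) :: real"
  have sets: "?A c \<in> sets M" for c
    using assms(1) by measurable
  have int_ind: "integrable M (\<lambda>x. 2 * (b - a) * indicator (?A c) x :: real)" for c
    using sets by (intro integrable_mult_right integrable_real_indicator)
      (auto simp: emeasure_finite less_top[symmetric])
  then have int_g: "integrable M (?g c)" for c
    by auto
  have E_g: "expectation (?g c) = (b - a) * (2 * prob (?A c) - 1)" for c
    using int_ind[of c] by (simp add: prob_space Int_absorb2) (simp add: algebra_simps)
  have int_d: "integrable M (\<lambda>x. \<bar>X x - b\<bar> - \<bar>X x - a\<bar>)"
    using integrable_abs_dev[OF assms(2)] by auto
  have E_d: "abs_dev X b - abs_dev X a = expectation (\<lambda>x. \<bar>X x - b\<bar> - \<bar>X x - a\<bar>)"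
    unfolding abs_dev_def using integrable_abs_dev[OF assms(2)] by simp
  \<comment> \<open>pointwise, \<open>|X - b| - |X - a|\<close> is \<open>b - a\<close> where \<open>X \<le> a\<close> and \<open>a - b\<close> where \<open>X \<ge> b\<close>\<close>
  have "expectation (?g a) \<le> expectation (\<lambda>x. \<bar>X x - b\<bar> - \<bar>X x - a\<bar>)"
    using assms(3) by (intro integral_mono[OF int_g int_d]) (auto simp: indicator_def abs_if)
  then show "(b - a) * (2 * prob (?A a) - 1) \<le> abs_dev X b - abs_dev X a"
    using E_g E_d by simp
  have "expectation (\<lambda>x. \<bar>X x - b\<bar> - \<bar>X x - a\<bar>) \<le> expectation (?g b)"
    using assms(3) by (intro integral_mono[OF int_d int_g]) (auto simp: indicator_def abs_if)
  then show "abs_dev X b - abs_dev X a \<le> (b - a) * (2 * prob (?A b) - 1)"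
    using E_g E_d by simp
qed

lemma expectile_fixed_point:
  assumes "integrable M X" "0 < \<tau>" "\<tau> < 1"
  shows "expectile M X \<tau> = expectation X + (2 * \<tau> - 1) * abs_dev X (expectile M X \<tau>)"
proof -
  let ?c = "2 * \<tau> - 1"
  have "\<exists>!t. expectation X + ?c * abs_dev X t = t"
  proof (rule banach_fix_type)
    show "0 \<le> \<bar>?c\<bar>" "\<bar>?c\<bar> < 1"
      using assms(2,3) by auto
    show "\<forall>s t. dist (expectation X + ?c * abs_dev X s) (expectation X + ?c * abs_dev X t)
        \<le> \<bar>?c\<bar> * dist s t"
      using abs_dev_lipschitz[OF assms(1)]
      by (simp add: dist_real_def abs_mult mult_left_mono flip: right_diff_distrib)
  qed
  then have "\<exists>!t. \<tau> * expectation (\<lambda>x. max (X x - t) 0) = (1 - \<tau>) * expectation (\<lambda>x. max (t - X x) 0)"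
    by (simp add: expectile_equation_iff[OF assms(1)] eq_commute)
  then have "\<tau> * expectation (\<lambda>x. max (X x - expectile M X \<tau>) 0)
      = (1 - \<tau>) * expectation (\<lambda>x. max (expectile M X \<tau> - X x) 0)"
    unfolding expectile_def by (rule theI')
  then show ?thesis
    by (simp add: expectile_equation_iff[OF assms(1)])
qed

lemma expectile_dist_mean:
  assumes "integrable M X" "0 < \<tau>" "\<tau> < 1"
  shows "\<bar>expectile M X \<tau> - expectation X\<bar>
    \<le> \<bar>2 * \<tau> - 1\<bar> * abs_dev X (expectation X) / (1 - \<bar>2 * \<tau> - 1\<bar>)"
proof -
  let ?e = "expectile M X \<tau>" and ?c = "\<bar>2 * \<tau> - 1\<bar>"
  have "\<bar>?e - expectation X\<bar> = ?c * abs_dev X ?e"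
    using expectile_fixed_point[OF assms] abs_dev_nonneg[of X ?e]
    by (metis abs_mult abs_of_nonneg add_diff_cancel_left')
  also have "\<dots> \<le> ?c * (abs_dev X (expectation X) + \<bar>?e - expectation X\<bar>)"
    using abs_dev_lipschitz[OF assms(1), of ?e "expectation X"] by (intro mult_left_mono) auto
  finally have "(1 - ?c) * \<bar>?e - expectation X\<bar> \<le> ?c * abs_dev X (expectation X)"
    by (simp add: algebra_simps)
  moreover have "0 < 1 - ?c"
    using assms(2,3) by auto
  ultimately show ?thesis
    by (simp add: pos_le_divide_eq mult.commute)
qed

lemma tendsto_expectile_mean:
  assumes "integrable M X"
  shows "(expectile M X \<longlongrightarrow> expectation X) (at (1/2))"
proof -
  let ?bound = "\<lambda>\<tau>. \<bar>2 * \<tau> - 1\<bar> * abs_dev X (expectation X) / (1 - \<bar>2 * \<tau> - 1\<bar>)"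
  have "(?bound \<longlongrightarrow> ?bound (1/2)) (at (1/2))"
    by (intro tendsto_intros) auto
  then have bound_0: "(?bound \<longlongrightarrow> 0) (at (1/2))"
    by simp
  have "\<forall>\<^sub>F \<tau> in at (1/2). \<tau> \<in> {0<..<1::real}"
    by (rule eventually_at_in_open') auto
  then have "\<forall>\<^sub>F \<tau> in at (1/2). norm (expectile M X \<tau> - expectation X) \<le> ?bound \<tau>"
    by eventually_elim (use expectile_dist_mean[OF assms] in auto)
  then have "((\<lambda>\<tau>. expectile M X \<tau> - expectation X) \<longlongrightarrow> 0) (at (1/2))"
    using bound_0 by (rule Lim_null_comparison)
  then show ?thesis
    by (rule LIM_zero_cancel)
qed

lemma expectile_skew2_bounds:
  assumes "X \<in> borel_measurable M" "integrable M X" "\<not> (\<exists>c. AE x in M. X x = c)"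
    and "0 < \<alpha>" "\<alpha> < 1/2"
  shows "2 * prob {x \<in> space M. X x \<le> expectile M X \<alpha>} - 1 \<le> expectile_skew2 M X \<alpha>"
    and "expectile_skew2 M X \<alpha> \<le> 2 * prob {x \<in> space M. X x \<le> expectile M X (1 - \<alpha>)} - 1"
proof -
  define lo where "lo = expectile M X \<alpha>"
  define hi where "hi = expectile M X (1 - \<alpha>)"
  have lo_eq: "lo = expectation X - (1 - 2 * \<alpha>) * abs_dev X lo"
    using expectile_fixed_point[OF assms(2), of \<alpha>] assms(4,5) unfolding lo_def
    by (simp add: algebra_simps)
  have hi_eq: "hi = expectation X + (1 - 2 * \<alpha>) * abs_dev X hi"
    using expectile_fixed_point[OF assms(2), of "1 - \<alpha>"] assms(4,5) unfolding hi_def by simp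
  have "hi - lo = (1 - 2 * \<alpha>) * (abs_dev X hi + abs_dev X lo)"
    using lo_eq hi_eq by (simp add: algebra_simps)
  moreover have "0 < (1 - 2 * \<alpha>) * (abs_dev X hi + abs_dev X lo)"
    using assms(5) abs_dev_pos[OF assms(2,3)] by (intro mult_pos_pos add_pos_pos) auto
  ultimately have lo_hi: "lo < hi"
    by linarith
  have "hi + lo - 2 * expectation X = (1 - 2 * \<alpha>) * (abs_dev X hi - abs_dev X lo)"
    using lo_eq hi_eq by (simp add: algebra_simps)
  then have skew: "expectile_skew2 M X \<alpha> = (abs_dev X hi - abs_dev X lo) / (hi - lo)"
    unfolding expectile_skew2_def lo_def[symmetric] hi_def[symmetric] using assms(5) by simp
  show "2 * prob {x \<in> space M. X x \<le> lo} - 1 \<le> expectile_skew2 M X \<alpha>"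
    using abs_dev_slope_bounds(1)[OF assms(1,2), of lo hi] lo_hi
    unfolding skew by (simp add: pos_le_divide_eq mult.commute)
  show "expectile_skew2 M X \<alpha> \<le> 2 * prob {x \<in> space M. X x \<le> hi} - 1"
    using abs_dev_slope_bounds(2)[OF assms(1,2), of lo hi] lo_hi
    unfolding skew by (simp add: pos_divide_le_eq mult.commute)
qed

end

theorem mainTheorem3:
  fixes M :: "'a measure" and X :: "'a \<Rightarrow> real" and F f :: "real \<Rightarrow> real"
  assumes "prob_space M"
    and "X \<in> borel_measurable M"
    and "integrable M X"
    and "\<not> (\<exists>c. AE x in M. X x = c)"
    and "\<And>t. F t = measure M {x \<in> space M. X x \<le> t}"
    and "\<And>t. (F has_real_derivative f t) (at t)"
  shows "((\<lambda>\<alpha>. expectile_skew2 M X \<alpha>) \<longlongrightarrow> 2 * F (\<integral>x. X x \<partial>M) - 1) (at_left (1/2))"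
proof -
  interpret prob_space M by fact
  let ?\<mu> = "expectation X"
  have near_half: "\<forall>\<^sub>F \<alpha> in at_left (1/2). \<alpha> \<in> {0<..<1/2::real}"
    by (rule eventually_at_left_real) simp
  have lo: "((\<lambda>\<alpha>. expectile M X \<alpha>) \<longlongrightarrow> ?\<mu>) (at_left (1/2))"
    by (rule tendsto_mono[OF at_le[OF subset_UNIV] tendsto_expectile_mean[OF assms(3)]])
  have "\<forall>\<^sub>F \<alpha> in at_left (1/2). 1 - \<alpha> \<noteq> (1/2::real)"
    using near_half by eventually_elim auto
  moreover have "((\<lambda>\<alpha>. 1 - \<alpha>) \<longlongrightarrow> 1 - 1/2) (at_left (1/2::real))"
    by (intro tendsto_intros)
  ultimately have "filterlim (\<lambda>\<alpha>. 1 - \<alpha>) (at (1/2)) (at_left (1/2::real))"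
    unfolding filterlim_at by simp
  then have hi: "((\<lambda>\<alpha>. expectile M X (1 - \<alpha>)) \<longlongrightarrow> ?\<mu>) (at_left (1/2))"
    by (rule filterlim_compose[OF tendsto_expectile_mean[OF assms(3)]])
  have F_cont: "isCont (\<lambda>t. 2 * F t - 1) ?\<mu>"
    using DERIV_isCont[OF assms(6)] by (intro continuous_intros)
  show ?thesis
  proof (rule tendsto_sandwich)
    show "((\<lambda>\<alpha>. 2 * F (expectile M X \<alpha>) - 1) \<longlongrightarrow> 2 * F ?\<mu> - 1) (at_left (1/2))"
      using isCont_tendsto_compose[OF F_cont lo] .
    show "((\<lambda>\<alpha>. 2 * F (expectile M X (1 - \<alpha>)) - 1) \<longlongrightarrow> 2 * F ?\<mu> - 1) (at_left (1/2))"
      using isCont_tendsto_compose[OF F_cont hi] .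
    show "\<forall>\<^sub>F \<alpha> in at_left (1/2). 2 * F (expectile M X \<alpha>) - 1 \<le> expectile_skew2 M X \<alpha>"
      using near_half
      by eventually_elim (simp add: assms(5) expectile_skew2_bounds(1)[OF assms(2-4)])
    show "\<forall>\<^sub>F \<alpha> in at_left (1/2). expectile_skew2 M X \<alpha> \<le> 2 * F (expectile M X (1 - \<alpha>)) - 1"
      using near_half
      by eventually_elim (simp add: assms(5) expectile_skew2_bounds(2)[OF assms(2-4)])
  qed
qed

end
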